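(* Fix integers $r\ge 2$ and $m\ge 1$, put $N=2^m$, fix a noise variance $\sigma^2>0$ and a threshold $P_e\in(0,1)$ (in the paper $P_e=2^{-N^{\beta}}$ for some $\beta<1/2$). For $1\le \ell\le r-1$ let $W_\ell$ be the $2^{\ell-1}\mathbb{Z}/2^{\ell}\mathbb{Z}$ channel with noise variance $\sigma^2$, and let $\mathcal{A}_\ell=\{i\in\{1,\dots,N\}: Z(W_{\ell,N}^{(i)})<P_e\}$ be the free set of the polar code $P(N,k_\ell)$ constructed for $W_\ell$, where $k_\ell=|\mathcal{A}_\ell|$. Then the polar codes constructed at the levels of the multilevel construction are nested: $$P(N,k_1)\subseteq P(N,k_2)\subseteq\cdots\subseteq P(N,k_{r-1}).$$
   Context: Mod-2 BAWGN channel with noise variance $s^2$: the input bit $x\in\{0,1\}$ is sent as the real number $x$, real Gaussian noise $z\sim\mathcal{N}(0,s^2)$ is added, and the receiver observes $(x+z)\bmod 2\mathbb{Z}$, reduced into $[-1,1]$. This is a binary-input memoryless output-symmetric channel. The $2^{\ell-1}\mathbb{Z}/2^{\ell}\mathbb{Z}$ channel with noise variance $\sigma^2$ has input bit $x$, transmits $2^{\ell-1}x$, adds noise $\mathcal{N}(0,\sigma^2)$, and outputs the result reduced modulo $2^{\ell}\mathbb{Z}$. Dividing the output by $2^{\ell-1}$ shows it is equivalent to the mod-2 BAWGN channel with noise variance $\sigma^2/4^{\ell-1}$. Polar codes: for a binary-input memoryless symmetric channel $W$ and $N=2^m$, let $G=\begin{bmatrix}1&0\\1&1\end{bmatrix}^{\otimes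 m}$. The synthesized bit channels are $$W_N^{(i)}(y_1^N,u_1^{i-1}\mid u_i)=\sum_{u_{i+1}^N\in\{0,1\}^{N-i}}\frac{1}{2^{N-1}}W^N(y_1^N\mid u_1^N G).$$ For a binary-input channel $V$ with output $y$, the Bhattacharyya parameter is $Z(V)=\sum_y\sqrt{V(y\mid 0)V(y\mid 1)}$, with an integral in place of the sum for continuous outputs. For a free set $\mathcal{A}\subseteq\{1,\dots,N\}$ the polar code is $\{u_{\mathcal{A}}G_{\mathcal{A}}: u_{\mathcal{A}}\in\{0,1\}^{|\mathcal{A}|}\}$, where $G_{\mathcal{A}}$ consists of the rows of $G$ indexed by $\mathcal{A}$ and the frozen bits are set to $0$. $P(N,k)$ denotes such a polar code with $k=|\mathcal{A}|$ information bits. *)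

theory Defs
  imports "HOL-Probability.Probability"
begin

text \<open>Bits are represented as bool (False = 0, True = 1); XOR is parity.
  Indices of vectors run over {1..N}, N = 2^m, as in the paper.\<close>

text \<open>The 2^(l-1)Z/2^l Z channel with noise variance s2: input bit b is sent as
  2^(l-1) b, Gaussian noise N(0,s2) is added and the output is reduced modulo
  2^l Z into [-2^(l-1), 2^(l-1)].\<close>
definition lattice_chan :: "real \<Rightarrow> nat \<Rightarrow> bool \<Rightarrow> real \<Rightarrow> real" where
  "lattice_chan s2 l b y =
     (\<Sum>\<^sub>\<infinity> k::int. normal_density (2 ^ (l - 1) * of_bool b) (sqrt s2) (y + 2 ^ l * of_int k))"

definition lattice_out :: "nat \<Rightarrow> real set" where
  "lattice_out l = {- (2 ^ (l - 1)) .. 2 ^ (l - 1)}"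

text \<open>Kronecker power of F = [[1,0],[1,1]] with 0-based indices:
  F^{(m+1)} = F \<otimes> F^{(m)}.\<close>
fun kron_F :: "nat \<Rightarrow> nat \<Rightarrow> nat \<Rightarrow> bool" where
  "kron_F 0 i j = True"
| "kron_F (Suc m) i j =
     ((j div 2 ^ m \<le> i div 2 ^ m) \<and> kron_F m (i mod 2 ^ m) (j mod 2 ^ m))"

definition polar_G :: "nat \<Rightarrow> nat \<Rightarrow> nat \<Rightarrow> bool" where
  "polar_G m i j = kron_F m (i - 1) (j - 1)"

definition polar_encode :: "nat \<Rightarrow> (nat \<Rightarrow> bool) \<Rightarrow> nat \<Rightarrow> bool" where
  "polar_encode m u j = odd (card {i \<in> {1..2 ^ m}. u i \<and> polar_G m i j})"

definition join_input :: "nat \<Rightarrow> (nat \<Rightarrow> bool) \<Rightarrow> bool \<Rightarrow> (nat \<Rightarrow> bool) \<Rightarrow> nat \<Rightarrow> bool" where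
  "join_input i u b v k = (if k < i then u k else if k = i then b else v k)"

definition bit_channel ::
  "(bool \<Rightarrow> real \<Rightarrow> real) \<Rightarrow> nat \<Rightarrow> nat \<Rightarrow> (nat \<Rightarrow> real) \<Rightarrow> (nat \<Rightarrow> bool) \<Rightarrow> bool \<Rightarrow> real" where
  "bit_channel W m i y u b =
     (\<Sum>v \<in> PiE {i+1..2 ^ m} (\<lambda>_. UNIV).
        (1 / 2 ^ (2 ^ m - 1)) *
        (\<Prod>j \<in> {1..2 ^ m}. W (polar_encode m (join_input i u b v) j) (y j)))"

definition bhatt_bit ::
  "(bool \<Rightarrow> real \<Rightarrow> real) \<Rightarrow> real set \<Rightarrow> nat \<Rightarrow> nat \<Rightarrow> ennreal" where
  "bhatt_bit W Y m i =
     (\<Sum>u \<in> PiE {1..i-1} (\<lambda>_. UNIV).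
        \<integral>\<^sup>+ y. indicator (PiE {1..2 ^ m} (\<lambda>_. Y)) y *
              ennreal (sqrt (bit_channel W m i y u False * bit_channel W m i y u True))
          \<partial>(PiM {1..2 ^ m} (\<lambda>_. lborel)))"

definition free_set ::
  "(bool \<Rightarrow> real \<Rightarrow> real) \<Rightarrow> real set \<Rightarrow> nat \<Rightarrow> real \<Rightarrow> nat set" where
  "free_set W Y m Pe = {i \<in> {1..2 ^ m}. bhatt_bit W Y m i < ennreal Pe}"

definition polar_code :: "nat \<Rightarrow> nat set \<Rightarrow> (nat \<Rightarrow> bool) set" where
  "polar_code m A =
     (\<lambda>u. restrict (polar_encode m u) {1..2 ^ m}) `
       PiE {1..2 ^ m} (\<lambda>i. if i \<in> A then UNIV else {False})"

end

theory Submission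
  imports Defs
begin

text \<open>The level-\<open>l\<close> channel is the mod-2 BAWGN channel with noise variance
  \<open>\<sigma>\<^sup>2 / 4 ^ (l - 1)\<close>, so higher levels are less noisy. More precisely, for \<open>l1 < l2\<close>
  the level-\<open>l1\<close> channel is a degraded version of the level-\<open>l2\<close> channel: rescale the
  level-\<open>l2\<close> output by \<open>2 ^ (l1 - l2)\<close>, add independent Gaussian noise and reduce modulo
  \<open>2 ^ l1\<close>. Degradation passes to the synthesized bit channels, and by Cauchy-Schwarz it
  cannot decrease their Bhattacharyya parameters. Hence every index that is good at level
  \<open>l1\<close> is good at level \<open>l2\<close>: the free sets, and with them the polar codes, are nested.\<close>

lemma nn_integral_count_space_int:
  fixes g :: "int \<Rightarrow> ennreal"
  shows "(\<integral>\<^sup>+k. g k \<partial>count_space UNIV) = (\<Sum>n. g (from_nat_into UNIV n))"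
  by (simp add: nn_integral_bij_count_space[symmetric, OF bij_betw_from_nat_into[OF countableI_type infinite_UNIV_int]]
      nn_integral_count_space_nat)

lemma borel_measurable_nn_integral_count_space_int[measurable]:
  fixes g :: "int \<Rightarrow> 'a \<Rightarrow> ennreal"
  assumes [measurable]: "\<And>k. g k \<in> borel_measurable M"
  shows "(\<lambda>y. \<integral>\<^sup>+k. g k y \<partial>count_space UNIV) \<in> borel_measurable M"
  unfolding nn_integral_count_space_int by measurable

lemma nn_integral_count_space_eq_infsum:
  fixes f :: "'a \<Rightarrow> real"
  assumes "f summable_on A" and "\<And>k. k \<in> A \<Longrightarrow> f k \<ge> 0"
  shows "(\<integral>\<^sup>+k. ennreal (f k) \<partial>count_space A) = ennreal (infsum f A)"
proof -
  have "Infinite_Set_Sum.abs_summable_on f A"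
    using assms(1) abs_summable_equivalent summable_on_iff_abs_summable_on_real by blast
  then show ?thesis
    using assms(2) by (simp add: nn_integral_conv_infsetsum infsetsum_infsum)
qed

definition periodize :: "real \<Rightarrow> (real \<Rightarrow> ennreal) \<Rightarrow> real \<Rightarrow> ennreal" where
  "periodize P f y = (\<integral>\<^sup>+k. f (y + P * of_int k) \<partial>count_space UNIV)"

lemma borel_measurable_periodize[measurable]:
  assumes [measurable]: "f \<in> borel_measurable borel"
  shows "periodize P f \<in> borel_measurable borel"
  unfolding periodize_def by measurable

lemma periodize_add_period: "periodize P f (y + P * of_int k) = periodize P f y"
proof -
  have "bij_betw (\<lambda>j. j + k) UNIV UNIV"
    by (rule bij_betwI[where g = "\<lambda>j. j - k"]) auto
  then have "(\<integral>\<^sup>+j. f (y + P * of_int (j + k)) \<partial>count_space UNIV) = periodize P f y"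
    unfolding periodize_def by (rule nn_integral_bij_count_space[where f = "\<lambda>j. f (y + P * of_int j)"])
  then show ?thesis
    unfolding periodize_def by (simp add: algebra_simps)
qed

lemma periodize_translate: "periodize P (\<lambda>z. f (z - s)) y = periodize P f (y - s)"
  unfolding periodize_def by (simp add: algebra_simps)

lemma mem_period_interval_iff:
  fixes P a z :: real and k :: int
  assumes "P > 0"
  shows "z \<in> {a + P * of_int k ..< a + P * of_int k + P} \<longleftrightarrow> k = \<lfloor>(z - a) / P\<rfloor>"
proof -
  have "z \<in> {a + P * of_int k ..< a + P * of_int k + P} \<longleftrightarrow> of_int k \<le> (z - a) / P \<and> (z - a) / P < of_int k + 1"
    using assms by (auto simp: field_simps)
  also have "\<dots> \<longleftrightarrow> k = \<lfloor>(z - a) / P\<rfloor>"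
    by (simp add: floor_eq_iff eq_commute[of k])
  finally show ?thesis .
qed

lemma nn_integral_periodize:
  fixes f :: "real \<Rightarrow> ennreal"
  assumes [measurable]: "f \<in> borel_measurable borel" and P: "P > 0"
  shows "(\<integral>\<^sup>+y. indicator {a..a + P} y * periodize P f y \<partial>lborel) = (\<integral>\<^sup>+y. f y \<partial>lborel)"
proof -
  let ?J = "\<lambda>k::int. {a + P * of_int k ..< a + P * of_int k + P}"
  have shift: "(\<integral>\<^sup>+y. indicator {a..a + P} y * f (y + P * of_int k) \<partial>lborel)
             = (\<integral>\<^sup>+z. indicator (?J k) z * f z \<partial>lborel)" for k
  proof -
    have "(\<integral>\<^sup>+z. indicator (?J k) z * f z \<partial>lborel)
        = (\<integral>\<^sup>+x. indicator (?J k) (P * of_int k + 1 * x) * f (P * of_int k + 1 * x) \<partial>lborel)"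
      using nn_integral_real_affine[of "\<lambda>z. indicator (?J k) z * f z" 1 "P * of_int k"] by simp
    also have "\<dots> = (\<integral>\<^sup>+x. indicator {a..<a + P} x * f (x + P * of_int k) \<partial>lborel)"
      by (auto intro!: nn_integral_cong simp: indicator_def add.commute)
    also have "\<dots> = (\<integral>\<^sup>+x. indicator {a..a + P} x * f (x + P * of_int k) \<partial>lborel)"
      by (intro nn_integral_cong_AE eventually_mono[OF AE_lborel_singleton[of "a + P"]])
        (auto simp: indicator_def)
    finally show ?thesis by (rule sym)
  qed
  have tile: "(\<integral>\<^sup>+k. indicator (?J k) z * f z \<partial>count_space UNIV) = f z" for z
  proof -
    have "(\<integral>\<^sup>+k. indicator (?J k) z * f z \<partial>count_space UNIV)
        = (\<Sum>k\<in>{\<lfloor>(z - a) / P\<rfloor>}. indicator (?J k) z * f z)"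
      by (rule nn_integral_count_space')
        (auto simp: indicator_def mem_period_interval_iff[OF P] simp del: atLeastLessThan_iff)
    then show ?thesis
      using mem_period_interval_iff[OF P, of z a "\<lfloor>(z - a) / P\<rfloor>"]
      by (simp add: indicator_def del: atLeastLessThan_iff)
  qed
  have "(\<integral>\<^sup>+y. indicator {a..a + P} y * periodize P f y \<partial>lborel)
      = (\<integral>\<^sup>+y. (\<integral>\<^sup>+k. indicator {a..a + P} y * f (y + P * of_int k) \<partial>count_space UNIV) \<partial>lborel)"
    unfolding periodize_def by (subst nn_integral_cmult) auto
  also have "\<dots> = (\<integral>\<^sup>+k. (\<integral>\<^sup>+y. indicator {a..a + P} y * f (y + P * of_int k) \<partial>lborel) \<partial>count_space UNIV)"
    by (rule nn_integral_count_space_nn_integral) auto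
  also have "\<dots> = (\<integral>\<^sup>+k. (\<integral>\<^sup>+z. indicator (?J k) z * f z \<partial>lborel) \<partial>count_space UNIV)"
    by (simp only: shift)
  also have "\<dots> = (\<integral>\<^sup>+z. (\<integral>\<^sup>+k. indicator (?J k) z * f z \<partial>count_space UNIV) \<partial>lborel)"
    by (rule nn_integral_count_space_nn_integral[symmetric]) auto
  also have "\<dots> = (\<integral>\<^sup>+z. f z \<partial>lborel)"
    by (simp only: tile)
  finally show ?thesis .
qed

lemma nn_integral_periodize_convolution:
  fixes f g :: "real \<Rightarrow> ennreal"
  assumes [measurable]: "f \<in> borel_measurable borel" "g \<in> borel_measurable borel"
    and P: "P > 0" and c: "c > 0"
  shows "(\<integral>\<^sup>+t. indicator {a..a + c * P} t * periodize P g (y - t / c) * periodize (c * P) f t \<partial>lborel)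
       = periodize P (\<lambda>v. \<integral>\<^sup>+t. g (v - t / c) * f t \<partial>lborel) y"
proof -
  define h where "h t = periodize P g (y - t / c) * f t" for t
  have [measurable]: "h \<in> borel_measurable borel"
    unfolding h_def by measurable
  \<comment> \<open>the first factor has period \<open>c * P\<close> in \<open>t\<close>, so it can be moved inside the second periodization\<close>
  have "periodize P g (y - t / c) * periodize (c * P) f t = periodize (c * P) h t" for t
  proof -
    have "periodize P g (y - (t + c * P * of_int k) / c) = periodize P g (y - t / c)" for k
    proof -
      have "y - (t + c * P * of_int k) / c = (y - t / c) + P * of_int (- k)"
        using c by (simp add: field_simps)
      then show ?thesis by (simp only: periodize_add_period)
    qed
    then show ?thesis
      unfolding periodize_def[of "c * P"] h_def
      by (subst nn_integral_cmult[symmetric]) auto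
  qed
  then have "(\<integral>\<^sup>+t. indicator {a..a + c * P} t * periodize P g (y - t / c) * periodize (c * P) f t \<partial>lborel)
      = (\<integral>\<^sup>+t. indicator {a..a + c * P} t * periodize (c * P) h t \<partial>lborel)"
    by (simp add: mult.assoc)
  also have "\<dots> = (\<integral>\<^sup>+t. h t \<partial>lborel)"
    using P c by (intro nn_integral_periodize) auto
  also have "\<dots> = (\<integral>\<^sup>+t. (\<integral>\<^sup>+k. g (y + P * of_int k - t / c) * f t \<partial>count_space UNIV) \<partial>lborel)"
    unfolding h_def periodize_def
    by (intro nn_integral_cong, subst nn_integral_multc[symmetric]) (auto simp: algebra_simps)
  also have "\<dots> = periodize P (\<lambda>v. \<integral>\<^sup>+t. g (v - t / c) * f t \<partial>lborel) y"
    unfolding periodize_def by (rule nn_integral_count_space_nn_integral) auto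
  finally show ?thesis .
qed

lemma normal_density_eq_centered: "normal_density \<mu> \<sigma> x = normal_density 0 \<sigma> (x - \<mu>)"
  by (simp add: normal_density_def)

lemma exp_neg_square_shift_le:
  fixes \<sigma> P t :: real and k :: int
  assumes "\<sigma> > 0"
  shows "exp (- (t + P * of_int k)\<^sup>2 / (2 * \<sigma>\<^sup>2))
       \<le> exp (t\<^sup>2 / (2 * \<sigma>\<^sup>2)) * exp (- (P\<^sup>2 / (4 * \<sigma>\<^sup>2)) * \<bar>of_int k\<bar>)"
proof -
  have "\<bar>real_of_int k\<bar> \<le> (real_of_int k)\<^sup>2"
  proof (cases "k = 0")
    case False
    then have "\<bar>real_of_int k\<bar> * 1 \<le> \<bar>real_of_int k\<bar> * \<bar>real_of_int k\<bar>"
      by (intro mult_left_mono) auto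
    then show ?thesis
      by (simp add: power2_eq_square abs_mult[symmetric])
  qed simp
  then have "P\<^sup>2 * \<bar>of_int k\<bar> \<le> P\<^sup>2 * (of_int k)\<^sup>2"
    by (intro mult_left_mono) auto
  also have "\<dots> \<le> 2 * ((t + P * of_int k)\<^sup>2 + t\<^sup>2)"
    using zero_le_power2[of "2 * t + P * of_int k"] by (simp add: power2_eq_square algebra_simps)
  finally have "P\<^sup>2 * \<bar>of_int k\<bar> \<le> 2 * ((t + P * of_int k)\<^sup>2 + t\<^sup>2)" .
  then have "- (t + P * of_int k)\<^sup>2 / (2 * \<sigma>\<^sup>2) \<le> t\<^sup>2 / (2 * \<sigma>\<^sup>2) + (- (P\<^sup>2 / (4 * \<sigma>\<^sup>2)) * \<bar>of_int k\<bar>)"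
    using assms by (simp add: field_simps)
  then show ?thesis
    by (simp add: exp_add[symmetric])
qed

lemma summable_on_exp_neg_abs_int:
  fixes b :: real
  assumes "b > 0"
  shows "(\<lambda>k::int. exp (- b * \<bar>of_int k\<bar>)) summable_on UNIV"
proof -
  have nat: "(\<lambda>n::nat. exp (- b * real n)) summable_on UNIV"
  proof (rule summable_nonneg_imp_summable_on)
    have "summable (\<lambda>n::nat. exp (- b) ^ n)"
      using assms by (intro summable_geometric) auto
    then show "summable (\<lambda>n::nat. exp (- b * real n))"
      by (simp add: exp_of_nat_mult[symmetric] mult.commute)
  qed auto
  have "(\<lambda>k::int. exp (- b * \<bar>of_int k\<bar>)) summable_on (range int \<union> range (\<lambda>n. - int n))"
    by (intro summable_on_union; subst summable_on_reindex) (use nat in \<open>auto simp: o_def inj_on_def\<close>)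
  moreover have "range int \<union> range (\<lambda>n. - int n) = (UNIV :: int set)"
    by (auto intro: int_cases2)
  ultimately show ?thesis
    by simp
qed

lemma normal_density_translates_summable_on:
  fixes \<mu> \<sigma> P y :: real
  assumes "\<sigma> > 0" and "P > 0"
  shows "(\<lambda>k::int. normal_density \<mu> \<sigma> (y + P * of_int k)) summable_on UNIV"
proof -
  define C where "C = 1 / sqrt (2 * pi * \<sigma>\<^sup>2) * exp ((y - \<mu>)\<^sup>2 / (2 * \<sigma>\<^sup>2))"
  have "(\<lambda>k::int. C * exp (- (P\<^sup>2 / (4 * \<sigma>\<^sup>2)) * \<bar>of_int k\<bar>)) summable_on UNIV"
    using assms by (intro summable_on_cmult_right summable_on_exp_neg_abs_int) auto
  then show ?thesis
  proof (rule summable_on_comparison_test)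
    fix k :: int
    have shift: "y + P * of_int k - \<mu> = (y - \<mu>) + P * of_int k"
      by simp
    show "normal_density \<mu> \<sigma> (y + P * of_int k) \<le> C * exp (- (P\<^sup>2 / (4 * \<sigma>\<^sup>2)) * \<bar>of_int k\<bar>)"
      unfolding normal_density_def C_def shift
      using exp_neg_square_shift_le[OF assms(1), of "y - \<mu>" P k]
      by (simp add: mult.assoc divide_right_mono)
  qed simp
qed

lemma normal_density_scale:
  fixes c \<sigma> \<mu> w :: real
  assumes "c > 0" and "\<sigma> > 0"
  shows "c * normal_density \<mu> \<sigma> (c * w) = normal_density (\<mu> / c) (\<sigma> / c) w"
proof -
  have "sqrt (2 * pi * (\<sigma> / c)\<^sup>2) = sqrt (2 * pi * \<sigma>\<^sup>2) / c"
    using assms by (simp add: real_sqrt_mult real_sqrt_divide power_divide)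
  moreover have "(w - \<mu> / c)\<^sup>2 / (2 * (\<sigma> / c)\<^sup>2) = (c * w - \<mu>)\<^sup>2 / (2 * \<sigma>\<^sup>2)"
  proof -
    have "w - \<mu> / c = (c * w - \<mu>) / c"
      using assms by (simp add: field_simps)
    then show ?thesis
      using assms by (simp add: power_divide)
  qed
  ultimately show ?thesis
    using assms unfolding normal_density_def by (simp add: minus_divide_left[symmetric])
qed

lemma nn_integral_normal_density: "\<sigma> > 0 \<Longrightarrow> (\<integral>\<^sup>+z. ennreal (normal_density \<mu> \<sigma> z) \<partial>lborel) = 1"
  by (subst nn_integral_eq_integral) auto

text \<open>Adding independent \<open>N(0, \<tau>\<^sup>2)\<close> noise to \<open>Z / c\<close>, with \<open>Z \<sim> N(\<mu>, \<sigma>\<^sup>2)\<close>,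
  gives \<open>N(\<mu> / c, \<sigma>\<^sup>2)\<close> when \<open>\<tau>\<^sup>2 + (\<sigma> / c)\<^sup>2 = \<sigma>\<^sup>2\<close>.\<close>
lemma nn_integral_normal_density_convolution_scaled:
  fixes c \<sigma> \<tau> \<mu> v :: real
  assumes c: "c > 0" and \<sigma>: "\<sigma> > 0" and \<tau>: "\<tau> > 0" and var: "\<tau>\<^sup>2 + (\<sigma> / c)\<^sup>2 = \<sigma>\<^sup>2"
  shows "(\<integral>\<^sup>+z. ennreal (normal_density 0 \<tau> (v - z / c)) * ennreal (normal_density \<mu> \<sigma> z) \<partial>lborel)
       = ennreal (normal_density (\<mu> / c) \<sigma> v)"
proof -
  let ?g = "\<lambda>w. ennreal (normal_density 0 \<tau> (v - w) * normal_density (\<mu> / c) (\<sigma> / c) w)"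
  have "(\<integral>\<^sup>+z. ennreal (normal_density 0 \<tau> (v - z / c)) * ennreal (normal_density \<mu> \<sigma> z) \<partial>lborel)
      = ennreal c * (\<integral>\<^sup>+w. ennreal (normal_density 0 \<tau> (v - w)) * ennreal (normal_density \<mu> \<sigma> (c * w)) \<partial>lborel)"
    using nn_integral_real_affine[of "\<lambda>z. ennreal (normal_density 0 \<tau> (v - z / c)) * ennreal (normal_density \<mu> \<sigma> z)" c 0] c
    by simp
  also have "\<dots> = (\<integral>\<^sup>+w. ?g w \<partial>lborel)"
    using c \<sigma>
    by (subst nn_integral_cmult[symmetric])
      (auto intro!: nn_integral_cong simp: ennreal_mult[symmetric] normal_density_scale[symmetric] ac_simps)
  also have "\<dots> = (\<integral>\<^sup>+u. ?g (\<mu> / c + 1 * u) \<partial>lborel)"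
    using nn_integral_real_affine[of ?g 1 "\<mu> / c"] by simp
  also have "\<dots> = (\<integral>\<^sup>+u. ennreal (normal_density 0 \<tau> ((v - \<mu> / c) - u) * normal_density 0 (\<sigma> / c) u) \<partial>lborel)"
    by (intro nn_integral_cong) (simp add: normal_density_eq_centered[of "\<mu> / c"] diff_diff_eq)
  also have "\<dots> = ennreal (normal_density 0 (sqrt (\<tau>\<^sup>2 + (\<sigma> / c)\<^sup>2)) (v - \<mu> / c))"
    using fun_cong[OF conv_normal_density_zero_mean[OF \<tau>, of "\<sigma> / c"], of "v - \<mu> / c"] c \<sigma> by simp
  also have "\<dots> = ennreal (normal_density (\<mu> / c) \<sigma> v)"
    using \<sigma> by (simp add: var normal_density_eq_centered[of "\<mu> / c"])
  finally show ?thesis .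
qed

lemma sqrt_mult_le_weighted_sum:
  fixes p q t :: real
  assumes "p \<ge> 0" and "q \<ge> 0" and "t > 0"
  shows "sqrt (p * q) \<le> t / 2 * p + 1 / (2 * t) * q"
proof -
  define u where "u = sqrt (t * p)"
  define v where "v = sqrt (q / t)"
  have "sqrt (p * q) = u * v"
    using assms by (simp add: u_def v_def real_sqrt_mult[symmetric])
  moreover have "t / 2 * p = u\<^sup>2 / 2" and "1 / (2 * t) * q = v\<^sup>2 / 2"
    using assms by (simp_all add: u_def v_def)
  moreover have "2 * (u * v) \<le> u\<^sup>2 + v\<^sup>2"
    using zero_le_power2[of "u - v"] by (simp add: power2_eq_square algebra_simps)
  ultimately show ?thesis
    by simp
qed

lemma le_sqrt_mult_if_le_weighted_sums:
  fixes x a b :: real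
  assumes "x \<ge> 0" and a: "a \<ge> 0" and b: "b \<ge> 0"
    and le: "\<And>t. t > 0 \<Longrightarrow> x \<le> t / 2 * a + 1 / (2 * t) * b"
  shows "x \<le> sqrt (a * b)"
proof (cases "a > 0 \<and> b > 0")
  case True
  define t where "t = sqrt b / sqrt a"
  have "t > 0"
    using True by (simp add: t_def)
  moreover have "t / 2 * a + 1 / (2 * t) * b = sqrt (a * b)"
    using True unfolding t_def by (simp add: field_simps real_sqrt_mult)
  ultimately show ?thesis
    using le by metis
next
  case False
  then have "a = 0 \<or> b = 0"
    using a b by auto
  show ?thesis
  proof (rule ccontr)
    assume "\<not> ?thesis"
    then have x: "x > 0"
      using \<open>a = 0 \<or> b = 0\<close> by auto
    \<comment> \<open>one of the two terms vanishes and the other can be made smaller than \<open>x\<close>\<close>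
    define t where "t = (if a = 0 then (b + 1) / x else x / (a + 1))"
    have "t > 0"
      using x a b by (simp add: t_def)
    moreover have "t / 2 * a + 1 / (2 * t) * b < x"
    proof (cases "a = 0")
      case True
      have "b * x / (2 * (b + 1)) < x"
        using x b by (simp add: divide_less_eq)
      then show ?thesis
        using True x b by (simp add: t_def mult.commute)
    next
      case False
      have "a * x / (2 * (a + 1)) < x"
        using x a by (simp add: divide_less_eq)
      then show ?thesis
        using False \<open>a = 0 \<or> b = 0\<close> by (simp add: t_def mult.commute)
    qed
    ultimately show False
      using le by (meson not_le)
  qed
qed

text \<open>Weighted Cauchy-Schwarz: optimizing the bound of \<open>sqrt_mult_le_weighted_sum\<close> over \<open>t\<close>
  after integration.\<close>
lemma nn_integral_sqrt_mult_le:
  fixes k :: "'a \<Rightarrow> ennreal" and p q :: "'a \<Rightarrow> real"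
  assumes [measurable]: "k \<in> borel_measurable M" "p \<in> borel_measurable M" "q \<in> borel_measurable M"
    and p: "\<And>x. p x \<ge> 0" and q: "\<And>x. q x \<ge> 0"
    and int_p: "(\<integral>\<^sup>+x. k x * ennreal (p x) \<partial>M) = ennreal a" and "a \<ge> 0"
    and int_q: "(\<integral>\<^sup>+x. k x * ennreal (q x) \<partial>M) = ennreal b" and "b \<ge> 0"
  shows "(\<integral>\<^sup>+x. k x * ennreal (sqrt (p x * q x)) \<partial>M) \<le> ennreal (sqrt (a * b))"
proof -
  define X where "X = (\<integral>\<^sup>+x. k x * ennreal (sqrt (p x * q x)) \<partial>M)"
  have bound: "X \<le> ennreal (t / 2 * a + 1 / (2 * t) * b)" if t: "t > 0" for t
  proof -
    have "k x * ennreal (sqrt (p x * q x))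
        \<le> ennreal (t / 2) * (k x * ennreal (p x)) + ennreal (1 / (2 * t)) * (k x * ennreal (q x))" for x
    proof -
      have "ennreal (sqrt (p x * q x)) \<le> ennreal (t / 2) * ennreal (p x) + ennreal (1 / (2 * t)) * ennreal (q x)"
        using sqrt_mult_le_weighted_sum[OF p q t] t p[of x] q[of x]
        by (simp add: ennreal_mult[symmetric] ennreal_plus[symmetric] del: ennreal_plus)
      then show ?thesis
        by (metis mult_left_mono distrib_left mult.left_commute zero_le)
    qed
    then have "X \<le> (\<integral>\<^sup>+x. ennreal (t / 2) * (k x * ennreal (p x)) + ennreal (1 / (2 * t)) * (k x * ennreal (q x)) \<partial>M)"
      unfolding X_def by (rule nn_integral_mono)
    also have "\<dots> = ennreal (t / 2 * a + 1 / (2 * t) * b)"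
      using t \<open>a \<ge> 0\<close> \<open>b \<ge> 0\<close>
      by (simp add: nn_integral_add nn_integral_cmult int_p int_q ennreal_mult[symmetric])
    finally show ?thesis .
  qed
  obtain x where x: "X = ennreal x" "x \<ge> 0"
    using bound[of 1] by (cases X) (auto simp: top_unique)
  have "x \<le> sqrt (a * b)"
  proof (rule le_sqrt_mult_if_le_weighted_sums[OF x(2) \<open>a \<ge> 0\<close> \<open>b \<ge> 0\<close>])
    fix t :: real
    assume "t > 0"
    then have "0 \<le> t / 2 * a + 1 / (2 * t) * b"
      using \<open>a \<ge> 0\<close> \<open>b \<ge> 0\<close> by simp
    then show "x \<le> t / 2 * a + 1 / (2 * t) * b"
      using bound[OF \<open>t > 0\<close>] x by (simp add: ennreal_le_iff)
  qed
  then show ?thesis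
    unfolding X_def[symmetric] x by (rule ennreal_leI)
qed

lemma indicator_PiE_eq_prod:
  assumes "finite I"
  shows "(indicator (PiE I (\<lambda>_. Y)) y :: ennreal)
       = (if y \<in> extensional I then \<Prod>j\<in>I. indicator Y (y j) else 0)"
  using assms by (auto simp: indicator_def PiE_iff prod_zero_iff)

lemma borel_measurable_bit_channel[measurable]:
  assumes [measurable]: "\<And>b. W b \<in> borel_measurable borel"
  shows "(\<lambda>y. bit_channel W m i y u b) \<in> borel_measurable (PiM {1..2 ^ m} (\<lambda>_. lborel))"
  unfolding bit_channel_def by measurable

lemma bit_channel_nonneg:
  assumes "\<And>b y. W b y \<ge> 0"
  shows "bit_channel W m i y u b \<ge> 0"
  unfolding bit_channel_def using assms by (intro sum_nonneg mult_nonneg_nonneg prod_nonneg) auto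

lemma ennreal_bit_channel:
  assumes "\<And>b y. W b y \<ge> 0"
  shows "ennreal (bit_channel W m i y u b)
       = (\<Sum>v\<in>PiE {i+1..2 ^ m} (\<lambda>_. UNIV). ennreal (1 / 2 ^ (2 ^ m - 1)) *
            ennreal (\<Prod>j\<in>{1..2 ^ m}. W (polar_encode m (join_input i u b v) j) (y j)))"
  unfolding bit_channel_def using assms
  by (simp add: sum_ennreal[symmetric] ennreal_mult[symmetric] prod_nonneg del: sum_ennreal)

text \<open>\<open>Q y1 y2\<close> is the transition density from an output \<open>y2 \<in> Y2\<close> of \<open>W2\<close> to an output
  \<open>y1 \<in> Y1\<close> of \<open>W1\<close>; the last conjunct says that \<open>W1\<close> is \<open>W2\<close> followed by \<open>Q\<close>.\<close>
definition degraded_via ::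
  "(bool \<Rightarrow> real \<Rightarrow> real) \<Rightarrow> real set \<Rightarrow> (bool \<Rightarrow> real \<Rightarrow> real) \<Rightarrow> real set \<Rightarrow>
    (real \<Rightarrow> real \<Rightarrow> ennreal) \<Rightarrow> bool" where
  "degraded_via W1 Y1 W2 Y2 Q \<longleftrightarrow>
     case_prod Q \<in> borel_measurable (borel \<Otimes>\<^sub>M borel) \<and>
     (\<forall>y2\<in>Y2. (\<integral>\<^sup>+y1. indicator Y1 y1 * Q y1 y2 \<partial>lborel) = 1) \<and>
     (\<forall>b. \<forall>y1\<in>Y1. (\<integral>\<^sup>+y2. indicator Y2 y2 * Q y1 y2 * ennreal (W2 b y2) \<partial>lborel) = ennreal (W1 b y1))"

definition product_kernel ::
  "(real \<Rightarrow> real \<Rightarrow> ennreal) \<Rightarrow> real set \<Rightarrow> nat set \<Rightarrow> (nat \<Rightarrow> real) \<Rightarrow> (nat \<Rightarrow> real) \<Rightarrow> ennreal" where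
  "product_kernel Q Y2 I y1 y2 = (\<Prod>j\<in>I. indicator Y2 (y2 j) * Q (y1 j) (y2 j))"

lemma nn_integral_product_kernel_prod:
  assumes deg: "degraded_via W1 Y1 W2 Y2 Q" and "finite I"
    and W1: "\<And>b y. W1 b y \<ge> 0" and W2: "\<And>b y. W2 b y \<ge> 0"
    and [measurable]: "\<And>b. W2 b \<in> borel_measurable borel" "Y2 \<in> sets borel"
    and y1: "\<And>j. j \<in> I \<Longrightarrow> y1 j \<in> Y1"
  shows "(\<integral>\<^sup>+y2. product_kernel Q Y2 I y1 y2 * ennreal (\<Prod>j\<in>I. W2 (x j) (y2 j)) \<partial>PiM I (\<lambda>_. lborel))
       = ennreal (\<Prod>j\<in>I. W1 (x j) (y1 j))"
proof -
  interpret product_sigma_finite "\<lambda>_::nat. lborel :: real measure"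
    by (simp add: product_sigma_finite_def lborel.sigma_finite_measure_axioms)
  have [measurable]: "case_prod Q \<in> borel_measurable (borel \<Otimes>\<^sub>M borel)"
    using deg by (simp add: degraded_via_def)
  have "(\<integral>\<^sup>+y2. product_kernel Q Y2 I y1 y2 * ennreal (\<Prod>j\<in>I. W2 (x j) (y2 j)) \<partial>PiM I (\<lambda>_. lborel))
      = (\<integral>\<^sup>+y2. (\<Prod>j\<in>I. indicator Y2 (y2 j) * Q (y1 j) (y2 j) * ennreal (W2 (x j) (y2 j))) \<partial>PiM I (\<lambda>_. lborel))"
    unfolding product_kernel_def using W2 by (simp add: prod_ennreal[symmetric] prod.distrib)
  also have "\<dots> = (\<Prod>j\<in>I. \<integral>\<^sup>+t. indicator Y2 t * Q (y1 j) t * ennreal (W2 (x j) t) \<partial>lborel)"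
    by (rule product_nn_integral_prod) (auto simp: \<open>finite I\<close>)
  also have "\<dots> = (\<Prod>j\<in>I. ennreal (W1 (x j) (y1 j)))"
    using deg y1 by (intro prod.cong) (auto simp: degraded_via_def)
  also have "\<dots> = ennreal (\<Prod>j\<in>I. W1 (x j) (y1 j))"
    using W1 by (simp add: prod_ennreal)
  finally show ?thesis .
qed

lemma ennreal_bit_channel_degraded:
  assumes deg: "degraded_via W1 Y1 W2 Y2 Q"
    and W1: "\<And>b y. W1 b y \<ge> 0" and W2: "\<And>b y. W2 b y \<ge> 0"
    and W2_meas[measurable]: "\<And>b. W2 b \<in> borel_measurable borel" and Y2[measurable]: "Y2 \<in> sets borel"
    and y1: "y1 \<in> PiE {1..2 ^ m} (\<lambda>_. Y1)"
  shows "ennreal (bit_channel W1 m i y1 u b)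
       = (\<integral>\<^sup>+y2. product_kernel Q Y2 {1..2 ^ m} y1 y2 * ennreal (bit_channel W2 m i y2 u b)
            \<partial>PiM {1..2 ^ m} (\<lambda>_. lborel))"
proof -
  let ?V = "PiE {i+1..2 ^ m} (\<lambda>_. UNIV :: bool set)"
  let ?c = "ennreal (1 / 2 ^ (2 ^ m - 1))"
  let ?x = "\<lambda>v. polar_encode m (join_input i u b v)"
  let ?K = "product_kernel Q Y2 {1..2 ^ m} y1"
  have [measurable]: "case_prod Q \<in> borel_measurable (borel \<Otimes>\<^sub>M borel)"
    using deg by (simp add: degraded_via_def)
  have "(\<integral>\<^sup>+y2. ?K y2 * ennreal (bit_channel W2 m i y2 u b) \<partial>PiM {1..2 ^ m} (\<lambda>_. lborel))
      = (\<integral>\<^sup>+y2. (\<Sum>v\<in>?V. ?c * (?K y2 * ennreal (\<Prod>j\<in>{1..2 ^ m}. W2 (?x v j) (y2 j))))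
           \<partial>PiM {1..2 ^ m} (\<lambda>_. lborel))"
    by (simp only: ennreal_bit_channel[OF W2] sum_distrib_left mult.left_commute)
  also have "\<dots> = (\<Sum>v\<in>?V. ?c * (\<integral>\<^sup>+y2. ?K y2 * ennreal (\<Prod>j\<in>{1..2 ^ m}. W2 (?x v j) (y2 j))
                    \<partial>PiM {1..2 ^ m} (\<lambda>_. lborel)))"
    by (subst nn_integral_sum) (auto simp: product_kernel_def intro!: sum.cong nn_integral_cmult)
  also have "\<dots> = (\<Sum>v\<in>?V. ?c * ennreal (\<Prod>j\<in>{1..2 ^ m}. W1 (?x v j) (y1 j)))"
  proof -
    have "(\<integral>\<^sup>+y2. ?K y2 * ennreal (\<Prod>j\<in>{1..2 ^ m}. W2 (x j) (y2 j)) \<partial>PiM {1..2 ^ m} (\<lambda>_. lborel))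
        = ennreal (\<Prod>j\<in>{1..2 ^ m}. W1 (x j) (y1 j))" for x
      by (rule nn_integral_product_kernel_prod[OF deg _ W1 W2 W2_meas Y2]) (use y1 in \<open>auto simp: PiE_iff\<close>)
    then show ?thesis
      by (simp only:)
  qed
  also have "\<dots> = ennreal (bit_channel W1 m i y1 u b)"
    by (simp only: ennreal_bit_channel[OF W1])
  finally show ?thesis by (rule sym)
qed

lemma nn_integral_product_kernel_indicator:
  assumes deg: "degraded_via W1 Y1 W2 Y2 Q" and "finite I"
    and [measurable]: "Y1 \<in> sets borel" "Y2 \<in> sets borel"
    and y2: "y2 \<in> extensional I"
  shows "(\<integral>\<^sup>+y1. indicator (PiE I (\<lambda>_. Y1)) y1 * product_kernel Q Y2 I y1 y2 \<partial>PiM I (\<lambda>_. lborel))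
       = indicator (PiE I (\<lambda>_. Y2)) y2"
proof -
  interpret product_sigma_finite "\<lambda>_::nat. lborel :: real measure"
    by (simp add: product_sigma_finite_def lborel.sigma_finite_measure_axioms)
  have [measurable]: "case_prod Q \<in> borel_measurable (borel \<Otimes>\<^sub>M borel)"
    using deg by (simp add: degraded_via_def)
  have normalized: "(\<integral>\<^sup>+t. indicator Y1 t * (indicator Y2 s * Q t s) \<partial>lborel) = indicator Y2 s" for s
    using deg by (cases "s \<in> Y2") (auto simp: degraded_via_def)
  have "(\<integral>\<^sup>+y1. indicator (PiE I (\<lambda>_. Y1)) y1 * product_kernel Q Y2 I y1 y2 \<partial>PiM I (\<lambda>_. lborel))
      = (\<integral>\<^sup>+y1. (\<Prod>j\<in>I. indicator Y1 (y1 j) * (indicator Y2 (y2 j) * Q (y1 j) (y2 j))) \<partial>PiM I (\<lambda>_. lborel))"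
    by (rule nn_integral_cong)
      (auto simp: space_PiM indicator_PiE_eq_prod[OF \<open>finite I\<close>] product_kernel_def prod.distrib PiE_iff)
  also have "\<dots> = (\<Prod>j\<in>I. \<integral>\<^sup>+t. indicator Y1 t * (indicator Y2 (y2 j) * Q t (y2 j)) \<partial>lborel)"
    by (rule product_nn_integral_prod) (auto simp: \<open>finite I\<close>)
  also have "\<dots> = indicator (PiE I (\<lambda>_. Y2)) y2"
    using y2 by (simp add: normalized indicator_PiE_eq_prod[OF \<open>finite I\<close>])
  finally show ?thesis .
qed

lemma bit_channel_sqrt_degraded_le:
  assumes deg: "degraded_via W1 Y1 W2 Y2 Q"
    and W1: "\<And>b y. W1 b y \<ge> 0" and W2: "\<And>b y. W2 b y \<ge> 0"
    and W2_meas[measurable]: "\<And>b. W2 b \<in> borel_measurable borel" and Y2[measurable]: "Y2 \<in> sets borel"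
    and y1: "y1 \<in> PiE {1..2 ^ m} (\<lambda>_. Y1)"
  shows "(\<integral>\<^sup>+y2. product_kernel Q Y2 {1..2 ^ m} y1 y2 *
            ennreal (sqrt (bit_channel W2 m i y2 u False * bit_channel W2 m i y2 u True))
          \<partial>PiM {1..2 ^ m} (\<lambda>_. lborel))
       \<le> ennreal (sqrt (bit_channel W1 m i y1 u False * bit_channel W1 m i y1 u True))"
proof -
  have [measurable]: "case_prod Q \<in> borel_measurable (borel \<Otimes>\<^sub>M borel)"
    using deg by (simp add: degraded_via_def)
  show ?thesis
    by (rule nn_integral_sqrt_mult_le[OF _
          borel_measurable_bit_channel[OF W2_meas] borel_measurable_bit_channel[OF W2_meas]
          bit_channel_nonneg[OF W2] bit_channel_nonneg[OF W2]
          ennreal_bit_channel_degraded[OF deg W1 W2 W2_meas Y2 y1, symmetric] _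
          ennreal_bit_channel_degraded[OF deg W1 W2 W2_meas Y2 y1, symmetric]])
      (auto simp: bit_channel_nonneg W1 product_kernel_def)
qed

lemma bhatt_bit_le_if_degraded_via:
  assumes deg: "degraded_via W1 Y1 W2 Y2 Q"
    and W1: "\<And>b y. W1 b y \<ge> 0" and W2: "\<And>b y. W2 b y \<ge> 0"
    and W2_meas[measurable]: "\<And>b. W2 b \<in> borel_measurable borel"
    and Y1[measurable]: "Y1 \<in> sets borel" and Y2[measurable]: "Y2 \<in> sets borel"
  shows "bhatt_bit W2 Y2 m i \<le> bhatt_bit W1 Y1 m i"
proof -
  define I where "I = {1..2 ^ m :: nat}"
  define M where "M = PiM I (\<lambda>_. lborel :: real measure)"
  define K where "K = product_kernel Q Y2 I"
  define ind1 :: "(nat \<Rightarrow> real) \<Rightarrow> ennreal" where "ind1 = indicator (PiE I (\<lambda>_. Y1))"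
  define S where "S W u y = ennreal (sqrt (bit_channel W m i y u False * bit_channel W m i y u True))"
    for W u y
  interpret finite_product_sigma_finite "\<lambda>_::nat. lborel :: real measure" I
    by standard (simp add: I_def)
  interpret pair_sigma_finite M M
    by (simp add: pair_sigma_finite_def sigma_finite_measure_axioms M_def)
  have [measurable]: "case_prod Q \<in> borel_measurable (borel \<Otimes>\<^sub>M borel)"
    using deg by (simp add: degraded_via_def)
  have [measurable]: "S W2 u \<in> borel_measurable M" for u
    unfolding S_def M_def I_def by measurable
  have [measurable]: "ind1 \<in> borel_measurable M"
    unfolding ind1_def M_def by (intro borel_measurable_indicator sets_PiM_I_finite) (auto simp: I_def)
  have [measurable]: "(\<lambda>(y1, y2). K y1 y2) \<in> borel_measurable (M \<Otimes>\<^sub>M M)"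
    unfolding K_def M_def product_kernel_def by measurable
  have pointwise: "(\<integral>\<^sup>+y2. ind1 y1 * K y1 y2 * S W2 u y2 \<partial>M) \<le> ind1 y1 * S W1 u y1" for y1 u
    using bit_channel_sqrt_degraded_le[OF deg W1 W2 W2_meas Y2, of y1 m i u]
    by (cases "y1 \<in> PiE I (\<lambda>_. Y1)")
      (auto simp: ind1_def K_def S_def M_def I_def nn_integral_cmult mult.assoc)
  have fubini: "(\<integral>\<^sup>+y1. (\<integral>\<^sup>+y2. ind1 y1 * K y1 y2 * S W2 u y2 \<partial>M) \<partial>M)
      = (\<integral>\<^sup>+y2. S W2 u y2 * (\<integral>\<^sup>+y1. ind1 y1 * K y1 y2 \<partial>M) \<partial>M)" for u
  proof -
    have "(\<integral>\<^sup>+y1. (\<integral>\<^sup>+y2. ind1 y1 * K y1 y2 * S W2 u y2 \<partial>M) \<partial>M)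
        = (\<integral>\<^sup>+y2. (\<integral>\<^sup>+y1. S W2 u y2 * (ind1 y1 * K y1 y2) \<partial>M) \<partial>M)"
      by (subst Fubini') (auto simp: ac_simps)
    also have "\<dots> = (\<integral>\<^sup>+y2. S W2 u y2 * (\<integral>\<^sup>+y1. ind1 y1 * K y1 y2 \<partial>M) \<partial>M)"
      by (intro nn_integral_cong nn_integral_cmult) measurable
    finally show ?thesis .
  qed
  have normalized: "(\<integral>\<^sup>+y1. ind1 y1 * K y1 y2 \<partial>M) = indicator (PiE I (\<lambda>_. Y2)) y2"
    if "y2 \<in> space M" for y2
    using that nn_integral_product_kernel_indicator[OF deg _ Y1 Y2]
    by (simp add: ind1_def K_def M_def I_def space_PiM PiE_def)
  have "bhatt_bit W2 Y2 m i
      = (\<Sum>u\<in>PiE {1..i-1} (\<lambda>_. UNIV). \<integral>\<^sup>+y2. S W2 u y2 * (\<integral>\<^sup>+y1. ind1 y1 * K y1 y2 \<partial>M) \<partial>M)"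
    unfolding bhatt_bit_def I_def[symmetric] M_def[symmetric]
    by (intro sum.cong refl nn_integral_cong) (simp add: normalized S_def mult.commute)
  also have "\<dots> = (\<Sum>u\<in>PiE {1..i-1} (\<lambda>_. UNIV). \<integral>\<^sup>+y1. (\<integral>\<^sup>+y2. ind1 y1 * K y1 y2 * S W2 u y2 \<partial>M) \<partial>M)"
    by (simp only: fubini)
  also have "\<dots> \<le> bhatt_bit W1 Y1 m i"
    unfolding bhatt_bit_def I_def[symmetric] M_def[symmetric]
    by (intro sum_mono nn_integral_mono order.trans[OF pointwise]) (simp add: ind1_def S_def)
  finally show ?thesis .
qed

lemma ennreal_lattice_chan:
  assumes "s2 > 0"
  shows "ennreal (lattice_chan s2 l b y)
       = periodize (2 ^ l) (\<lambda>z. ennreal (normal_density (2 ^ (l - 1) * of_bool b) (sqrt s2) z)) y"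
  unfolding lattice_chan_def periodize_def using assms
  by (intro nn_integral_count_space_eq_infsum[symmetric] normal_density_translates_summable_on) auto

lemma lattice_chan_nonneg: "lattice_chan s2 l b y \<ge> 0"
  unfolding lattice_chan_def by (rule infsum_nonneg) simp

lemma borel_measurable_lattice_chan:
  assumes "s2 > 0"
  shows "lattice_chan s2 l b \<in> borel_measurable borel"
proof -
  have "lattice_chan s2 l b
      = (\<lambda>y. enn2real (periodize (2 ^ l) (\<lambda>z. ennreal (normal_density (2 ^ (l - 1) * of_bool b) (sqrt s2) z)) y))"
    using ennreal_lattice_chan[OF assms] lattice_chan_nonneg by (metis enn2real_ennreal)
  then show ?thesis
    by simp
qed

lemma lattice_out_eq_period_interval:
  assumes "1 \<le> l"
  shows "lattice_out l = {- (2 ^ (l - 1)) .. - (2 ^ (l - 1)) + 2 ^ l}"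
proof -
  have "(2::real) ^ l = 2 * 2 ^ (l - 1)"
    using assms by (simp add: power_eq_if)
  then show ?thesis
    by (simp add: lattice_out_def)
qed

text \<open>The noise variances add up to \<open>s2 / c\<^sup>2 + \<tau>\<^sup>2 = s2\<close>, and after division by \<open>c\<close>
  reduction modulo \<open>2 ^ l2\<close> becomes reduction modulo \<open>2 ^ l1\<close>.\<close>
lemma lattice_chan_degraded_via:
  assumes "1 \<le> l1" and "l1 < l2" and s2: "s2 > 0"
  defines "c \<equiv> (2::real) ^ (l2 - l1)" and "\<tau> \<equiv> sqrt (s2 - s2 / 4 ^ (l2 - l1))"
  shows "degraded_via (lattice_chan s2 l1) (lattice_out l1) (lattice_chan s2 l2) (lattice_out l2)
           (\<lambda>y1 y2. periodize (2 ^ l1) (\<lambda>z. ennreal (normal_density 0 \<tau> z)) (y1 - y2 / c))"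
proof -
  define P where "P = (2::real) ^ l1"
  let ?g = "\<lambda>z. ennreal (normal_density 0 \<tau> z)"
  have "c \<ge> 2"
    using \<open>l1 < l2\<close> power_increasing[of 1 "l2 - l1" "2::real"] by (simp add: c_def)
  have period2: "(2::real) ^ l2 = c * P" and shift2: "(2::real) ^ (l2 - 1) = c * 2 ^ (l1 - 1)"
    using assms(1,2) by (simp_all add: c_def P_def power_add[symmetric])
  have c2: "c\<^sup>2 = 4 ^ (l2 - l1)"
    by (simp add: c_def power_even_eq[symmetric] power_mult)
  have "1 < c\<^sup>2"
    using \<open>c \<ge> 2\<close> by (simp add: one_less_power)
  then have "s2 / c\<^sup>2 < s2"
    using s2 by (simp add: divide_less_eq)
  then have \<tau>: "\<tau> > 0" and var: "\<tau>\<^sup>2 + (sqrt s2 / c)\<^sup>2 = (sqrt s2)\<^sup>2"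
    using s2 by (simp_all add: \<tau>_def power_divide c2[symmetric])
  have normalized: "(\<integral>\<^sup>+y1. indicator (lattice_out l1) y1 * periodize P ?g (y1 - y2 / c) \<partial>lborel) = 1" for y2
  proof -
    have "(\<integral>\<^sup>+y1. indicator (lattice_out l1) y1 * periodize P ?g (y1 - y2 / c) \<partial>lborel)
        = (\<integral>\<^sup>+z. ?g (z - y2 / c) \<partial>lborel)"
      unfolding lattice_out_eq_period_interval[OF \<open>1 \<le> l1\<close>] periodize_translate[symmetric] P_def
      by (rule nn_integral_periodize) auto
    also have "\<dots> = 1"
      using nn_integral_normal_density[OF \<tau>, of "y2 / c"] by (simp add: normal_density_eq_centered[of "y2 / c"])
    finally show ?thesis .
  qed
  have reproduces: "(\<integral>\<^sup>+y2. indicator (lattice_out l2) y2 * periodize P ?g (y1 - y2 / c) *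
        ennreal (lattice_chan s2 l2 b y2) \<partial>lborel) = ennreal (lattice_chan s2 l1 b y1)" for b y1
  proof -
    let ?f = "\<lambda>z. ennreal (normal_density (2 ^ (l2 - 1) * of_bool b) (sqrt s2) z)"
    have "(\<integral>\<^sup>+y2. indicator (lattice_out l2) y2 * periodize P ?g (y1 - y2 / c) *
          ennreal (lattice_chan s2 l2 b y2) \<partial>lborel)
        = (\<integral>\<^sup>+t. indicator {- (2 ^ (l2 - 1)) .. - (2 ^ (l2 - 1)) + c * P} t *
            periodize P ?g (y1 - t / c) * periodize (c * P) ?f t \<partial>lborel)"
      using assms(1,2) by (simp add: lattice_out_eq_period_interval ennreal_lattice_chan[OF s2] period2)
    also have "\<dots> = periodize P (\<lambda>v. \<integral>\<^sup>+t. ?g (v - t / c) * ?f t \<partial>lborel) y1"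
      using \<open>c \<ge> 2\<close> by (intro nn_integral_periodize_convolution) (auto simp: P_def)
    also have "\<dots> = periodize P (\<lambda>v. ennreal (normal_density (2 ^ (l2 - 1) * of_bool b / c) (sqrt s2) v)) y1"
      using \<open>c \<ge> 2\<close> s2 \<tau> var by (simp add: nn_integral_normal_density_convolution_scaled)
    also have "\<dots> = ennreal (lattice_chan s2 l1 b y1)"
    proof -
      have "2 ^ (l2 - 1) * of_bool b / c = 2 ^ (l1 - 1) * of_bool b"
        using \<open>c \<ge> 2\<close> shift2 by simp
      then show ?thesis
        by (simp only: ennreal_lattice_chan[OF s2] P_def)
    qed
    finally show ?thesis .
  qed
  show ?thesis
    unfolding degraded_via_def P_def[symmetric] using normalized reproduces by simp measurable
qed

lemma bhatt_bit_lattice_chan_antimono: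
  assumes "1 \<le> l1" and "l1 \<le> l2" and "s2 > 0"
  shows "bhatt_bit (lattice_chan s2 l2) (lattice_out l2) m i \<le> bhatt_bit (lattice_chan s2 l1) (lattice_out l1) m i"
proof (cases "l1 = l2")
  case False
  with assms show ?thesis
    by (intro bhatt_bit_le_if_degraded_via[OF lattice_chan_degraded_via])
      (auto simp: lattice_chan_nonneg borel_measurable_lattice_chan lattice_out_def)
qed simp

lemma free_set_antimono:
  assumes "\<And>i. bhatt_bit W2 Y2 m i \<le> bhatt_bit W1 Y1 m i"
  shows "free_set W1 Y1 m Pe \<subseteq> free_set W2 Y2 m Pe"
  using assms by (auto simp: free_set_def intro: le_less_trans)

lemma polar_code_mono: "A \<subseteq> B \<Longrightarrow> polar_code m A \<subseteq> polar_code m B"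
  unfolding polar_code_def by (intro image_mono PiE_mono) auto

theorem lemma1:
  fixes r m :: nat and s2 Pe :: real
  assumes "r \<ge> 2" and "m \<ge> 1" and "s2 > 0" and "0 < Pe" and "Pe < 1"
  shows "\<forall>l1 l2. 1 \<le> l1 \<and> l1 \<le> l2 \<and> l2 \<le> r - 1 \<longrightarrow>
           polar_code m (free_set (lattice_chan s2 l1) (lattice_out l1) m Pe)
             \<subseteq> polar_code m (free_set (lattice_chan s2 l2) (lattice_out l2) m Pe)"
  using \<open>s2 > 0\<close> by (auto intro!: polar_code_mono free_set_antimono bhatt_bit_lattice_chan_antimono)

end
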